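(* Let $\mathcal U=\{(\alpha,d): \alpha\in(0,1),\ d\in\mathcal D_\alpha\}$. Then $\mathcal U$ is a biconvex set (each slice $\{d:(\alpha,d)\in\mathcal U\}$ for fixed $\alpha$ and each slice $\{\alpha:(\alpha,d)\in\mathcal U\}$ for fixed $d$ is convex), $f_0^*>0$ on $\mathcal U$, and $\ln f_0^*$ is strictly biconcave on $\mathcal U$: for each fixed $\alpha$, $d\mapsto \ln f_0^*(\alpha,d)$ is strictly concave on its slice, and for each fixed $d$, $\alpha\mapsto \ln f_0^*(\alpha,d)$ is strictly concave on its slice.
   Context: All parameters $s_{\rm in},\gamma,\beta,\varphi_{\max},k_s,\rho_{\max},k_v,q_{\min},\mu_{\max}$ are strictly positive. $\varphi(s)=\frac{\varphi_{\max}s}{k_s+s}$, $\rho(v)=\frac{\rho_{\max}v}{k_v+v}$, $\mu(q)=\mu_{\max}(1-q_{\min}/q)$, with inverses $\varphi^{-1}:[0,\varphi_{\max})\to[0,\infty)$, $\mu^{-1}:[0,\mu_{\max})\to[q_{\min},\infty)$, $\rho^{-1}:[0,\rho_{\max})\to[0,\infty)$. $\psi_{\max}=\frac{\mu_{\max}\rho_{\max}}{\rho_{\max}+q_{\min}\mu_{\max}}$, $\psi^{-1}(y)=\rho^{-1}(y\,\mu^{-1}(y))$ for $y\in[0,\psi_{\max})$. For $\alpha\in(0,1)$: $\psi_\alpha^{-1}(d)=\varphi^{-1}(d/(1-\alpha))+\psi^{-1}(d)/(\alpha\beta\gamma)$ and $\mathcal{D}_\alpha=\{d\in(0,\min\{(1-\alpha)\varphi_{\max},\psi_{\max}\}):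 \psi_\alpha^{-1}(d)<s_{\rm in}\}$. $f_0^*(\alpha,d)=\frac{d\,(v_{\rm in}^*(\alpha,d)-\psi^{-1}(d))}{\mu^{-1}(d)}$ with $v_{\rm in}^*(\alpha,d)=\alpha\beta\gamma\big(s_{\rm in}-\varphi^{-1}(d/(1-\alpha))\big)$. *)

theory Defs
  imports "HOL-Analysis.Analysis"
begin

definition strictly_concave_on :: "real set \<Rightarrow> (real \<Rightarrow> real) \<Rightarrow> bool" where
  "strictly_concave_on S f \<longleftrightarrow> convex S \<and>
     (\<forall>x\<in>S. \<forall>y\<in>S. x \<noteq> y \<longrightarrow> (\<forall>u::real. 0 < u \<and> u < 1 \<longrightarrow>
        f ((1 - u) * x + u * y) > (1 - u) * f x + u * f y))"

definition phi :: "real \<Rightarrow> real \<Rightarrow> real \<Rightarrow> real" where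
  "phi phimax ks s = phimax * s / (ks + s)"

definition rho :: "real \<Rightarrow> real \<Rightarrow> real \<Rightarrow> real" where
  "rho rhomax kv v = rhomax * v / (kv + v)"

definition mu :: "real \<Rightarrow> real \<Rightarrow> real \<Rightarrow> real" where
  "mu mumax qmin q = mumax * (1 - qmin / q)"

text \<open>Inverses: phi^{-1} : [0,phimax) -> [0,inf), mu^{-1} : [0,mumax) -> [qmin,inf),
  rho^{-1} : [0,rhomax) -> [0,inf).\<close>
definition phi_inv :: "real \<Rightarrow> real \<Rightarrow> real \<Rightarrow> real" where
  "phi_inv phimax ks y = the_inv_into {0..} (phi phimax ks) y"

definition rho_inv :: "real \<Rightarrow> real \<Rightarrow> real \<Rightarrow> real" where
  "rho_inv rhomax kv y = the_inv_into {0..} (rho rhomax kv) y"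

definition mu_inv :: "real \<Rightarrow> real \<Rightarrow> real \<Rightarrow> real" where
  "mu_inv mumax qmin y = the_inv_into {qmin..} (mu mumax qmin) y"

definition psi_max :: "real \<Rightarrow> real \<Rightarrow> real \<Rightarrow> real" where
  "psi_max mumax rhomax qmin = mumax * rhomax / (rhomax + qmin * mumax)"

definition psi_inv :: "real \<Rightarrow> real \<Rightarrow> real \<Rightarrow> real \<Rightarrow> real \<Rightarrow> real" where
  "psi_inv rhomax kv mumax qmin y = rho_inv rhomax kv (y * mu_inv mumax qmin y)"

definition psi_alpha_inv ::
  "real \<Rightarrow> real \<Rightarrow> real \<Rightarrow> real \<Rightarrow> real \<Rightarrow> real \<Rightarrow> real \<Rightarrow> real \<Rightarrow> real \<Rightarrow> real \<Rightarrow> real" where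
  "psi_alpha_inv gamma beta phimax ks rhomax kv qmin mumax \<alpha> d =
     phi_inv phimax ks (d / (1 - \<alpha>)) + psi_inv rhomax kv mumax qmin d / (\<alpha> * beta * gamma)"

definition D_alpha ::
  "real \<Rightarrow> real \<Rightarrow> real \<Rightarrow> real \<Rightarrow> real \<Rightarrow> real \<Rightarrow> real \<Rightarrow> real \<Rightarrow> real \<Rightarrow> real \<Rightarrow> real set" where
  "D_alpha s_in gamma beta phimax ks rhomax kv qmin mumax \<alpha> =
     {d. 0 < d \<and> d < min ((1 - \<alpha>) * phimax) (psi_max mumax rhomax qmin) \<and>
         psi_alpha_inv gamma beta phimax ks rhomax kv qmin mumax \<alpha> d < s_in}"

definition v_in_star ::
  "real \<Rightarrow> real \<Rightarrow> real \<Rightarrow> real \<Rightarrow> real \<Rightarrow> real \<Rightarrow> real \<Rightarrow> real" where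
  "v_in_star s_in gamma beta phimax ks \<alpha> d =
     \<alpha> * beta * gamma * (s_in - phi_inv phimax ks (d / (1 - \<alpha>)))"

definition f0_star ::
  "real \<Rightarrow> real \<Rightarrow> real \<Rightarrow> real \<Rightarrow> real \<Rightarrow> real \<Rightarrow> real \<Rightarrow> real \<Rightarrow> real \<Rightarrow> real \<Rightarrow> real \<Rightarrow> real" where
  "f0_star s_in gamma beta phimax ks rhomax kv qmin mumax \<alpha> d =
     d * (v_in_star s_in gamma beta phimax ks \<alpha> d - psi_inv rhomax kv mumax qmin d)
       / mu_inv mumax qmin d"

definition U_set ::
  "real \<Rightarrow> real \<Rightarrow> real \<Rightarrow> real \<Rightarrow> real \<Rightarrow> real \<Rightarrow> real \<Rightarrow> real \<Rightarrow> real \<Rightarrow> (real \<times> real) set" where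
  "U_set s_in gamma beta phimax ks rhomax kv qmin mumax =
     {(\<alpha>, d). 0 < \<alpha> \<and> \<alpha> < 1 \<and> d \<in> D_alpha s_in gamma beta phimax ks rhomax kv qmin mumax \<alpha>}"

end

theory Submission
  imports Defs
begin

(* On U all inverse kinetic functions are explicit: phi^-1(y) = ks y / (phimax - y) and
   psi^-1(d) = kappa d / (psi_max - d) with kappa > 0.  Hence
   f0^* = d C (mumax - d) / (qmin mumax), where C(alpha,d) = v_in^*(alpha,d) - psi^-1(d)
   = alpha beta gamma (s_in - psi_alpha^-1(d)), and U is the part of the box
   0 < alpha < 1, 0 < d < min (phimax (1 - alpha)) psi_max on which C > 0.
   In each variable separately, C is an affine function minus positive multiples of maps
   x |-> x / (b - x), which are strictly convex on x < b.  So C is strictly concave in each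
   variable, the slices of U are superlevel sets of concave functions and hence convex, and
   ln f0^* = ln C + (concave terms) is strictly concave. *)

lemma inverse_convex_combination_less:
  fixes x y u :: real
  assumes "0 < x" "0 < y" "x \<noteq> y" "0 < u" "u < 1"
  shows "inverse ((1 - u) * x + u * y) < (1 - u) / x + u / y"
proof -
  have m: "0 < (1 - u) * x + u * y"
    using assms by (intro add_pos_pos mult_pos_pos) auto
  have "0 < u * (1 - u) * (x - y)\<^sup>2 / (x * y * ((1 - u) * x + u * y))"
    using assms m by (intro divide_pos_pos) auto
  also have "\<dots> = (1 - u) / x + u / y - inverse ((1 - u) * x + u * y)"
    using assms m by (simp add: field_simps power2_eq_square)
  finally show ?thesis by simp
qed

lemma strictly_concave_on_neg_div_diff:
  fixes b :: real
  assumes "0 < b"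
  shows "strictly_concave_on {..<b} (\<lambda>x. - x / (b - x))"
  unfolding strictly_concave_on_def
proof (intro conjI ballI allI impI)
  fix x y u :: real
  assume "x \<in> {..<b}" "y \<in> {..<b}" "x \<noteq> y" and u: "0 < u \<and> u < 1"
  then have xy: "0 < b - x" "0 < b - y" "b - x \<noteq> b - y" by auto
  have shift: "- z / (b - z) = 1 - b / (b - z)" if "z < b" for z
    using that by (simp add: field_simps)
  have mix: "b - ((1 - u) * x + u * y) = (1 - u) * (b - x) + u * (b - y)"
    by (simp add: algebra_simps)
  have less: "b / ((1 - u) * (b - x) + u * (b - y)) < b * ((1 - u) / (b - x) + u / (b - y))"
    using inverse_convex_combination_less[OF xy] u assms by (simp add: divide_inverse)
  have mix_less: "(1 - u) * x + u * y < b"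
    using convex_bound_lt[of x b y "1 - u" u] xy u by simp
  have "(1 - u) * (- x / (b - x)) + u * (- y / (b - y))
      = (1 - u) * (1 - b / (b - x)) + u * (1 - b / (b - y))"
    using xy by (simp only: shift diff_gt_0_iff_gt)
  also have "\<dots> = 1 - b * ((1 - u) / (b - x) + u / (b - y))"
    by (simp add: algebra_simps)
  also have "\<dots> < 1 - b / ((1 - u) * (b - x) + u * (b - y))"
    using less by linarith
  also have "\<dots> = - ((1 - u) * x + u * y) / (b - ((1 - u) * x + u * y))"
    using shift[OF mix_less] by (simp add: mix)
  finally show "(1 - u) * (- x / (b - x)) + u * (- y / (b - y))
      < - ((1 - u) * x + u * y) / (b - ((1 - u) * x + u * y))" .
qed simp

lemma strictly_concave_on_imp_concave_on:
  "strictly_concave_on S f \<Longrightarrow> concave_on S f"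
  unfolding strictly_concave_on_def
  by (intro concave_on_linorderI) (auto intro: less_imp_le)

lemma strictly_concave_on_subset:
  "\<lbrakk>strictly_concave_on T f; S \<subseteq> T; convex S\<rbrakk> \<Longrightarrow> strictly_concave_on S f"
  unfolding strictly_concave_on_def by blast

lemma strictly_concave_on_cong:
  assumes "\<And>x. x \<in> S \<Longrightarrow> f x = g x"
  shows "strictly_concave_on S f \<longleftrightarrow> strictly_concave_on S g"
proof -
  have "(1 - u) * x + u * y \<in> S" if "convex S" "x \<in> S" "y \<in> S" "0 < u" "u < 1" for x y u
    using that by (simp add: convex_alt)
  then show ?thesis
    unfolding strictly_concave_on_def using assms by (metis (no_types, lifting))
qed

lemma strictly_concave_on_add:
  assumes f: "strictly_concave_on S f" and g: "concave_on S g"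
  shows "strictly_concave_on S (\<lambda>x. f x + g x)"
  unfolding strictly_concave_on_def
proof (intro conjI ballI allI impI)
  show "convex S" using f unfolding strictly_concave_on_def by simp
  fix x y u :: real
  assume xy: "x \<in> S" "y \<in> S" "x \<noteq> y" and u: "0 < u \<and> u < 1"
  have "(1 - u) * f x + u * f y < f ((1 - u) * x + u * y)"
    using f xy u unfolding strictly_concave_on_def by blast
  moreover have "(1 - u) * g x + u * g y \<le> g ((1 - u) * x + u * y)"
    using concave_onD[OF g, of u x y] xy u by simp
  ultimately show "(1 - u) * (f x + g x) + u * (f y + g y)
      < f ((1 - u) * x + u * y) + g ((1 - u) * x + u * y)"
    by (simp add: algebra_simps)
qed

lemma strictly_concave_on_cmul:
  fixes c :: real
  assumes "0 < c" and "strictly_concave_on S f"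
  shows "strictly_concave_on S (\<lambda>x. c * f x)"
  using assms unfolding strictly_concave_on_def
  by (smt (verit, best) distrib_left mult.left_commute mult_strict_left_mono)

lemma concave_on_ln_comp:
  fixes S :: "real set"
  assumes "concave_on S g" and "\<And>x. x \<in> S \<Longrightarrow> 0 < g x"
  shows "concave_on S (\<lambda>x. ln (g x))"
proof (rule concave_on_linorderI)
  show "convex S" using assms(1) by (rule concave_on_imp_convex)
  fix u x y :: real
  assume u: "0 < u" "u < 1" and xy: "x \<in> S" "y \<in> S"
  then have mix: "(1 - u) * x + u * y \<in> S"
    using \<open>convex S\<close> by (simp add: convex_alt)
  have "(1 - u) * ln (g x) + u * ln (g y) \<le> ln ((1 - u) * g x + u * g y)"
    using concave_onD[OF ln_concave, of u "g x" "g y"] u xy assms(2) by simp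
  also have "\<dots> \<le> ln (g ((1 - u) * x + u * y))"
    using concave_onD[OF assms(1), of u x y] u xy mix assms(2)
    by (simp add: add_pos_pos)
  finally show "(1 - u) * ln (g x) + u * ln (g y) \<le> ln (g ((1 - u) *\<^sub>R x + u *\<^sub>R y))"
    by simp
qed

lemma strictly_concave_on_ln_comp:
  assumes "strictly_concave_on S g" and "\<And>x. x \<in> S \<Longrightarrow> 0 < g x"
  shows "strictly_concave_on S (\<lambda>x. ln (g x))"
  unfolding strictly_concave_on_def
proof (intro conjI ballI allI impI)
  show "convex S" using assms(1) unfolding strictly_concave_on_def by simp
  fix x y u :: real
  assume xy: "x \<in> S" "y \<in> S" "x \<noteq> y" and u: "0 < u \<and> u < 1"
  have "(1 - u) * ln (g x) + u * ln (g y) \<le> ln ((1 - u) * g x + u * g y)"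
    using concave_onD[OF ln_concave, of u "g x" "g y"] u xy assms(2) by simp
  also have "\<dots> < ln (g ((1 - u) * x + u * y))"
    using assms xy u unfolding strictly_concave_on_def
    by (smt (verit) add_pos_pos ln_less_cancel_iff mult_pos_pos)
  finally show "(1 - u) * ln (g x) + u * ln (g y) < ln (g ((1 - u) * x + u * y))" .
qed

lemma convex_superlevel_set_concave:
  fixes S :: "real set"
  assumes "concave_on S f"
  shows "convex {x \<in> S. a < f x}"
  unfolding convex_alt
proof (intro ballI allI impI)
  fix x y u :: real
  assume "x \<in> {x \<in> S. a < f x}" "y \<in> {x \<in> S. a < f x}" and u: "0 \<le> u \<and> u \<le> 1"
  then have xy: "x \<in> S" "y \<in> S" "a < f x" "a < f y" by auto
  have "(1 - u) * x + u * y \<in> S"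
    using concave_on_imp_convex[OF assms] xy u by (simp add: convex_alt)
  moreover have "- ((1 - u) * f x + u * f y) < - a"
    using convex_bound_lt[of "- f x" "- a" "- f y" "1 - u" u] xy u by simp
  moreover have "(1 - u) * f x + u * f y \<le> f ((1 - u) * x + u * y)"
    using concave_onD[OF assms, of u x y] xy u by simp
  ultimately show "(1 - u) *\<^sub>R x + u *\<^sub>R y \<in> {x \<in> S. a < f x}" by simp
qed

lemma strictly_concave_on_ln_add_superlevel:
  fixes I :: "real set" and f g h :: "real \<Rightarrow> real"
  defines "S \<equiv> {x \<in> I. 0 < g x}"
  assumes g: "strictly_concave_on I g" and h: "concave_on I h"
    and f: "\<And>x. x \<in> S \<Longrightarrow> f x = ln (g x) + h x"
  shows "strictly_concave_on S f"
proof -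
  have "convex S"
    unfolding S_def using g by (intro convex_superlevel_set_concave strictly_concave_on_imp_concave_on)
  then have "strictly_concave_on S g"
    using g unfolding S_def by (rule_tac strictly_concave_on_subset) auto
  then have "strictly_concave_on S (\<lambda>x. ln (g x))"
    by (rule strictly_concave_on_ln_comp) (simp add: S_def)
  moreover have "concave_on S h"
    using h \<open>convex S\<close> unfolding concave_on_def S_def by (rule_tac convex_on_subset) auto
  ultimately have "strictly_concave_on S (\<lambda>x. ln (g x) + h x)"
    by (rule strictly_concave_on_add)
  then show ?thesis
    using f by (subst strictly_concave_on_cong) auto
qed

lemma mem_alpha_interval_iff:
  fixes phimax d \<alpha> :: real
  assumes "0 < phimax" "0 < d"
  shows "\<alpha> \<in> {0<..<1 - d / phimax} \<longleftrightarrow> 0 < \<alpha> \<and> \<alpha> < 1 \<and> d < phimax * (1 - \<alpha>)"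
proof -
  have "\<alpha> < 1 - d / phimax \<longleftrightarrow> d < phimax * (1 - \<alpha>)"
    using assms by (simp add: field_simps)
  moreover have "0 < d / phimax"
    using assms by simp
  ultimately show ?thesis by auto
qed

lemma phi_inv_eq:
  assumes "0 < phimax" "0 < ks" "0 \<le> y" "y < phimax"
  shows "phi_inv phimax ks y = ks * y / (phimax - y)"
proof -
  have "inj_on (phi phimax ks) {0..}"
  proof (rule inj_onI)
    fix a b :: real
    assume "a \<in> {0..}" "b \<in> {0..}" "phi phimax ks a = phi phimax ks b"
    then have "phimax * ks * a = phimax * ks * b"
      using assms by (simp add: phi_def field_simps)
    then show "a = b" using assms by simp
  qed
  moreover have "phi phimax ks (ks * y / (phimax - y)) = y"
    using assms by (simp add: phi_def field_simps)
  ultimately show ?thesis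
    unfolding phi_inv_def using assms by (intro the_inv_into_f_eq) auto
qed

lemma rho_inv_eq:
  assumes "0 < rhomax" "0 < kv" "0 \<le> y" "y < rhomax"
  shows "rho_inv rhomax kv y = kv * y / (rhomax - y)"
  using phi_inv_eq[OF assms] unfolding phi_inv_def rho_inv_def phi_def rho_def .

lemma mu_inv_eq:
  assumes "0 < mumax" "0 < qmin" "0 \<le> y" "y < mumax"
  shows "mu_inv mumax qmin y = qmin * mumax / (mumax - y)"
proof -
  have "inj_on (mu mumax qmin) {qmin..}"
  proof (rule inj_onI)
    fix a b :: real
    assume "a \<in> {qmin..}" "b \<in> {qmin..}" "mu mumax qmin a = mu mumax qmin b"
    then show "a = b" using assms by (simp add: mu_def field_simps)
  qed
  moreover have "mu mumax qmin (qmin * mumax / (mumax - y)) = y"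
    using assms by (simp add: mu_def field_simps)
  moreover have "qmin \<le> qmin * mumax / (mumax - y)"
    using assms by (simp add: field_simps)
  ultimately show ?thesis
    unfolding mu_inv_def by (intro the_inv_into_f_eq) auto
qed

lemma psi_max_less_mumax:
  assumes "0 < mumax" "0 < rhomax" "0 < qmin"
  shows "psi_max mumax rhomax qmin < mumax"
  using assms by (simp add: psi_max_def field_simps add_pos_pos)

lemma psi_inv_eq:
  assumes "0 < rhomax" "0 < kv" "0 < mumax" "0 < qmin" "0 \<le> d" "d < psi_max mumax rhomax qmin"
  shows "psi_inv rhomax kv mumax qmin d
    = kv * qmin * mumax / (rhomax + qmin * mumax) * (d / (psi_max mumax rhomax qmin - d))"
proof -
  define R where "R = rhomax + qmin * mumax"
  define y where "y = d * qmin * mumax / (mumax - d)"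
  have R: "0 < R" using assms by (simp add: R_def add_pos_pos)
  have "d < mumax" using psi_max_less_mumax[of mumax rhomax qmin] assms by linarith
  have lt: "R * d < rhomax * mumax"
    using assms R by (simp add: psi_max_def R_def field_simps)
  have gap: "rhomax - y = (rhomax * mumax - R * d) / (mumax - d)"
    using \<open>d < mumax\<close> by (simp add: y_def R_def field_simps)
  have "0 < rhomax - y"
    unfolding gap using \<open>d < mumax\<close> lt by simp
  then have "y < rhomax" by simp
  have "0 \<le> y"
    using assms \<open>d < mumax\<close> by (simp add: y_def)
  have "psi_inv rhomax kv mumax qmin d = rho_inv rhomax kv y"
    unfolding psi_inv_def y_def using mu_inv_eq assms \<open>d < mumax\<close> by (simp add: mult.assoc)
  also have "\<dots> = kv * y / (rhomax - y)"
    using rho_inv_eq assms \<open>0 \<le> y\<close> \<open>y < rhomax\<close> by blast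
  also have "\<dots> = kv * qmin * mumax * d / (rhomax * mumax - R * d)"
    unfolding gap using \<open>d < mumax\<close> lt by (simp add: y_def)
  also have "\<dots> = kv * qmin * mumax / R * (d / (psi_max mumax rhomax qmin - d))"
  proof -
    have "psi_max mumax rhomax qmin - d = (rhomax * mumax - R * d) / R"
      using R by (simp add: psi_max_def R_def field_simps)
    then show ?thesis using R lt by simp
  qed
  finally show ?thesis unfolding R_def .
qed

lemma v_in_star_eq:
  assumes "0 < phimax" "0 < ks" "0 \<le> d" "\<alpha> < 1" "d < phimax * (1 - \<alpha>)"
  shows "v_in_star s_in gamma beta phimax ks \<alpha> d
    = \<alpha> * beta * gamma * s_in - \<alpha> * beta * gamma * ks * (d / (phimax * (1 - \<alpha>) - d))"
proof -
  have gap: "phimax - d / (1 - \<alpha>) = (phimax * (1 - \<alpha>) - d) / (1 - \<alpha>)"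
    using assms by (simp add: field_simps)
  have "d / (1 - \<alpha>) < phimax" using assms by (simp add: field_simps)
  then have "phi_inv phimax ks (d / (1 - \<alpha>)) = ks * (d / (1 - \<alpha>)) / (phimax - d / (1 - \<alpha>))"
    using assms by (intro phi_inv_eq) auto
  also have "\<dots> = ks * (d / (phimax * (1 - \<alpha>) - d))"
    unfolding gap using assms by simp
  finally show ?thesis unfolding v_in_star_def by (simp add: algebra_simps)
qed

locale chemostat =
  fixes s_in gamma beta phimax ks rhomax kv qmin mumax :: real
  assumes s_in_pos: "0 < s_in" and gamma_pos: "0 < gamma" and beta_pos: "0 < beta"
    and phimax_pos: "0 < phimax" and ks_pos: "0 < ks" and rhomax_pos: "0 < rhomax"
    and kv_pos: "0 < kv" and qmin_pos: "0 < qmin" and mumax_pos: "0 < mumax"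
begin

abbreviation "feasible_set \<equiv> U_set s_in gamma beta phimax ks rhomax kv qmin mumax"
abbreviation "f0 \<equiv> f0_star s_in gamma beta phimax ks rhomax kv qmin mumax"
abbreviation "psimax \<equiv> psi_max mumax rhomax qmin"

definition consumed :: "real \<Rightarrow> real \<Rightarrow> real" where
  "consumed \<alpha> d = v_in_star s_in gamma beta phimax ks \<alpha> d - psi_inv rhomax kv mumax qmin d"

lemma consumed_eq_psi_alpha_inv:
  "\<alpha> \<noteq> 0 \<Longrightarrow> consumed \<alpha> d
    = \<alpha> * beta * gamma * (s_in - psi_alpha_inv gamma beta phimax ks rhomax kv qmin mumax \<alpha> d)"
  unfolding consumed_def v_in_star_def psi_alpha_inv_def
  using beta_pos gamma_pos by (simp add: field_simps)

lemma mem_feasible_set_iff: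
  "(\<alpha>, d) \<in> feasible_set \<longleftrightarrow>
    0 < \<alpha> \<and> \<alpha> < 1 \<and> 0 < d \<and> d < phimax * (1 - \<alpha>) \<and> d < psimax \<and> 0 < consumed \<alpha> d"
proof -
  have "psi_alpha_inv gamma beta phimax ks rhomax kv qmin mumax \<alpha> d < s_in \<longleftrightarrow> 0 < consumed \<alpha> d"
    if "0 < \<alpha>"
  proof -
    have "0 < \<alpha> * beta * gamma" using that beta_pos gamma_pos by simp
    moreover have "\<alpha> \<noteq> 0" using that by simp
    ultimately show ?thesis
      using consumed_eq_psi_alpha_inv mult_less_cancel_left_pos[of "\<alpha> * beta * gamma" 0] by simp
  qed
  then show ?thesis
    unfolding U_set_def D_alpha_def by (auto simp: mult.commute)
qed

lemma psimax_less_mumax: "psimax < mumax"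
  using psi_max_less_mumax mumax_pos rhomax_pos qmin_pos .

lemma ln_f0_eq:
  assumes "(\<alpha>, d) \<in> feasible_set"
  shows "ln (f0 \<alpha> d) = ln (consumed \<alpha> d) + (ln d + ln (mumax - d) - ln (qmin * mumax))"
    and "0 < f0 \<alpha> d"
proof -
  have d: "0 < d" "d < mumax" "0 < consumed \<alpha> d"
    using assms psimax_less_mumax by (auto simp: mem_feasible_set_iff)
  have "f0 \<alpha> d = d * consumed \<alpha> d * (mumax - d) / (qmin * mumax)"
    unfolding f0_star_def consumed_def
    using mu_inv_eq[OF mumax_pos qmin_pos] d by simp
  then show "ln (f0 \<alpha> d) = ln (consumed \<alpha> d) + (ln d + ln (mumax - d) - ln (qmin * mumax))"
    and "0 < f0 \<alpha> d"
    using d mumax_pos qmin_pos by (simp_all add: ln_div ln_mult)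
qed

lemma consumed_eq:
  assumes "0 \<le> d" "\<alpha> < 1" "d < phimax * (1 - \<alpha>)" "d < psimax"
  shows "consumed \<alpha> d = \<alpha> * beta * gamma * s_in
    - \<alpha> * beta * gamma * ks * (d / (phimax * (1 - \<alpha>) - d))
    - kv * qmin * mumax / (rhomax + qmin * mumax) * (d / (psimax - d))"
  unfolding consumed_def
  using v_in_star_eq[OF phimax_pos ks_pos assms(1-3)] psi_inv_eq[OF rhomax_pos kv_pos mumax_pos qmin_pos assms(1,4)]
  by simp

lemma strictly_concave_on_consumed_d:
  assumes "0 < \<alpha>" "\<alpha> < 1"
  shows "strictly_concave_on {0<..<min (phimax * (1 - \<alpha>)) psimax} (\<lambda>d. consumed \<alpha> d)"
proof -
  define I where "I = {0<..<min (phimax * (1 - \<alpha>)) psimax}"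
  define c where "c = \<alpha> * beta * gamma"
  define \<kappa> where "\<kappa> = kv * qmin * mumax / (rhomax + qmin * mumax)"
  have c: "0 < c" and \<kappa>: "0 \<le> \<kappa>"
    using assms beta_pos gamma_pos kv_pos qmin_pos mumax_pos rhomax_pos
    by (simp_all add: c_def \<kappa>_def)
  have a: "0 < phimax * (1 - \<alpha>)" and psimax: "0 < psimax"
    using assms phimax_pos mumax_pos rhomax_pos qmin_pos by (simp_all add: psi_max_def add_pos_pos)
  have "strictly_concave_on I (\<lambda>d. c * ks * (- d / (phimax * (1 - \<alpha>) - d))
      + (c * s_in + \<kappa> * (- d / (psimax - d))))"
  proof (rule strictly_concave_on_add)
    have "strictly_concave_on I (\<lambda>d. - d / (phimax * (1 - \<alpha>) - d))"
      by (rule strictly_concave_on_subset[OF strictly_concave_on_neg_div_diff[OF a]])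
        (auto simp: I_def)
    then show "strictly_concave_on I (\<lambda>d. c * ks * (- d / (phimax * (1 - \<alpha>) - d)))"
      using c ks_pos by (rule_tac strictly_concave_on_cmul) auto
    have "strictly_concave_on I (\<lambda>d. - d / (psimax - d))"
      by (rule strictly_concave_on_subset[OF strictly_concave_on_neg_div_diff[OF psimax]])
        (auto simp: I_def)
    then have "concave_on I (\<lambda>d. - d / (psimax - d))"
      by (rule strictly_concave_on_imp_concave_on)
    then show "concave_on I (\<lambda>d. c * s_in + \<kappa> * (- d / (psimax - d)))"
      using \<kappa> c by (intro concave_on_add concave_on_cmul) (auto simp: concave_on_const I_def)
  qed
  moreover have "consumed \<alpha> d = c * ks * (- d / (phimax * (1 - \<alpha>) - d))
      + (c * s_in + \<kappa> * (- d / (psimax - d)))" if "d \<in> I" for d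
    using that assms unfolding I_def c_def \<kappa>_def by (simp add: consumed_eq algebra_simps)
  ultimately show ?thesis
    unfolding I_def by (subst strictly_concave_on_cong) auto
qed

lemma strictly_concave_on_consumed_alpha:
  assumes "0 < d" "d < phimax" "d < psimax"
  shows "strictly_concave_on {0<..<1 - d / phimax} (\<lambda>\<alpha>. consumed \<alpha> d)"
proof -
  define b where "b = 1 - d / phimax"
  define c where "c = beta * gamma * ks * d / phimax"
  define P where "P = psi_inv rhomax kv mumax qmin d"
  have b: "0 < b" and c: "0 < c"
    using assms phimax_pos beta_pos gamma_pos ks_pos by (simp_all add: b_def c_def)
  have "strictly_concave_on {0<..<b} (\<lambda>\<alpha>. c * (- \<alpha> / (b - \<alpha>)) + (beta * gamma * s_in * \<alpha> - P))"
  proof (rule strictly_concave_on_add)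
    have "strictly_concave_on {0<..<b} (\<lambda>\<alpha>. - \<alpha> / (b - \<alpha>))"
      by (rule strictly_concave_on_subset[OF strictly_concave_on_neg_div_diff[OF b]]) auto
    then show "strictly_concave_on {0<..<b} (\<lambda>\<alpha>. c * (- \<alpha> / (b - \<alpha>)))"
      using c by (rule_tac strictly_concave_on_cmul) auto
    show "concave_on {0<..<b} (\<lambda>\<alpha>. beta * gamma * s_in * \<alpha> - P)"
      using beta_pos gamma_pos s_in_pos
      by (intro concave_on_diff concave_on_cmul) (auto simp: concave_on_ident convex_on_const)
  qed
  moreover have "consumed \<alpha> d = c * (- \<alpha> / (b - \<alpha>)) + (beta * gamma * s_in * \<alpha> - P)"
    if "\<alpha> \<in> {0<..<b}" for \<alpha>
  proof -
    have gap: "b - \<alpha> = (phimax * (1 - \<alpha>) - d) / phimax"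
      using phimax_pos by (simp add: b_def field_simps)
    have "d < phimax * (1 - \<alpha>)" "\<alpha> < 1"
      using that mem_alpha_interval_iff[OF phimax_pos \<open>0 < d\<close>] by (simp_all add: b_def)
    then show ?thesis
      using assms phimax_pos unfolding c_def P_def consumed_def gap
      by (simp add: v_in_star_eq[OF phimax_pos ks_pos] field_simps)
  qed
  ultimately show ?thesis
    unfolding b_def by (subst strictly_concave_on_cong) auto
qed

lemma strictly_concave_on_ln_f0_d_slice:
  "strictly_concave_on {d. (\<alpha>, d) \<in> feasible_set} (\<lambda>d. ln (f0 \<alpha> d))"
proof (cases "0 < \<alpha> \<and> \<alpha> < 1")
  case True
  define I where "I = {0<..<min (phimax * (1 - \<alpha>)) psimax}"
  have slice: "{d. (\<alpha>, d) \<in> feasible_set} = {d \<in> I. 0 < consumed \<alpha> d}"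
    using True by (auto simp: mem_feasible_set_iff I_def)
  have mumax_gap: "0 < mumax - d" if "d \<in> I" for d
    using that psimax_less_mumax by (simp add: I_def)
  show ?thesis
    unfolding slice
  proof (rule strictly_concave_on_ln_add_superlevel)
    show "concave_on I (\<lambda>d. ln d + ln (mumax - d) - ln (qmin * mumax))"
      using mumax_gap by (intro concave_on_diff concave_on_add concave_on_ln_comp)
        (auto simp: concave_on_ident concave_on_const convex_on_ident convex_on_const I_def)
    show "strictly_concave_on I (consumed \<alpha>)"
      unfolding I_def using True by (intro strictly_concave_on_consumed_d) auto
    show "ln (f0 \<alpha> d) = ln (consumed \<alpha> d) + (ln d + ln (mumax - d) - ln (qmin * mumax))"
      if "d \<in> {d \<in> I. 0 < consumed \<alpha> d}" for d
      using ln_f0_eq(1) that slice by blast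
  qed
next
  case False
  then have "{d. (\<alpha>, d) \<in> feasible_set} = {}"
    by (auto simp: mem_feasible_set_iff)
  then show ?thesis by (simp add: strictly_concave_on_def)
qed

lemma strictly_concave_on_ln_f0_alpha_slice:
  "strictly_concave_on {\<alpha>. (\<alpha>, d) \<in> feasible_set} (\<lambda>\<alpha>. ln (f0 \<alpha> d))"
proof (cases "0 < d \<and> d < phimax \<and> d < psimax")
  case True
  define I where "I = {0<..<1 - d / phimax}"
  have slice: "{\<alpha>. (\<alpha>, d) \<in> feasible_set} = {\<alpha> \<in> I. 0 < consumed \<alpha> d}"
    using True mem_alpha_interval_iff[OF phimax_pos]
    by (auto simp: mem_feasible_set_iff I_def)
  show ?thesis
    unfolding slice
  proof (rule strictly_concave_on_ln_add_superlevel)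
    show "strictly_concave_on I (\<lambda>\<alpha>. consumed \<alpha> d)"
      unfolding I_def using True by (intro strictly_concave_on_consumed_alpha) auto
    show "concave_on I (\<lambda>\<alpha>. ln d + ln (mumax - d) - ln (qmin * mumax))"
      by (simp add: concave_on_const I_def)
    show "ln (f0 \<alpha> d) = ln (consumed \<alpha> d) + (ln d + ln (mumax - d) - ln (qmin * mumax))"
      if "\<alpha> \<in> {\<alpha> \<in> I. 0 < consumed \<alpha> d}" for \<alpha>
      using ln_f0_eq(1) that slice by blast
  qed
next
  case False
  have "d < phimax" if "(\<alpha>, d) \<in> feasible_set" for \<alpha>
  proof -
    have "0 < \<alpha>" "d < phimax * (1 - \<alpha>)"
      using that by (auto simp: mem_feasible_set_iff)
    moreover have "phimax * (1 - \<alpha>) < phimax"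
      using phimax_pos \<open>0 < \<alpha>\<close> by (simp add: algebra_simps)
    ultimately show ?thesis by linarith
  qed
  then have "{\<alpha>. (\<alpha>, d) \<in> feasible_set} = {}"
    using False by (auto simp: mem_feasible_set_iff)
  then show ?thesis by (simp add: strictly_concave_on_def)
qed

end

theorem proposition1:
  fixes s_in gamma beta phimax ks rhomax kv qmin mumax :: real
  assumes "0 < s_in" "0 < gamma" "0 < beta" "0 < phimax" "0 < ks"
    "0 < rhomax" "0 < kv" "0 < qmin" "0 < mumax"
  defines "U \<equiv> U_set s_in gamma beta phimax ks rhomax kv qmin mumax"
    and "F \<equiv> f0_star s_in gamma beta phimax ks rhomax kv qmin mumax"
  shows "(\<forall>\<alpha>. convex {d. (\<alpha>, d) \<in> U}) \<and> (\<forall>d. convex {\<alpha>. (\<alpha>, d) \<in> U})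
     \<and> (\<forall>(\<alpha>, d) \<in> U. F \<alpha> d > 0)
     \<and> (\<forall>\<alpha>. strictly_concave_on {d. (\<alpha>, d) \<in> U} (\<lambda>d. ln (F \<alpha> d)))
     \<and> (\<forall>d. strictly_concave_on {\<alpha>. (\<alpha>, d) \<in> U} (\<lambda>\<alpha>. ln (F \<alpha> d)))"
proof -
  interpret chemostat s_in gamma beta phimax ks rhomax kv qmin mumax
    using assms(1-9) by unfold_locales
  have d_slices: "strictly_concave_on {d. (\<alpha>, d) \<in> U} (\<lambda>d. ln (F \<alpha> d))" for \<alpha>
    unfolding U_def F_def by (rule strictly_concave_on_ln_f0_d_slice)
  have alpha_slices: "strictly_concave_on {\<alpha>. (\<alpha>, d) \<in> U} (\<lambda>\<alpha>. ln (F \<alpha> d))" for d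
    unfolding U_def F_def by (rule strictly_concave_on_ln_f0_alpha_slice)
  have "F \<alpha> d > 0" if "(\<alpha>, d) \<in> U" for \<alpha> d
    using ln_f0_eq(2) that unfolding U_def F_def .
  moreover have "convex S" if "strictly_concave_on S f" for S f
    using that by (simp add: strictly_concave_on_def)
  ultimately show ?thesis
    using d_slices alpha_slices by blast
qed

end
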